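(* Let ${\bf u}\in\mathcal A^{\mathbb N}$ have its language closed under reversal. Suppose $v$ is a palindromic complete mirror return to a factor $w$ of ${\bf u}$ such that $b\widetilde w$ is a suffix of $v$ and $av$ is a factor of ${\bf u}$ for some letters $a,b\in\mathcal A$. Then $\{(a,-1),(b,+1)\}$ is an edge of $\Gamma(w)$. If moreover $w$ is a palindrome and $a\ne b$, then $\{a,b\}$ is an edge of $\Theta(w)$.
   Context: $\widetilde w$ is the reversal of $w$; the language of ${\bf u}$ is closed under reversal if the reversal of every factor is a factor. A word $c=c_1c_2\cdots c_n$ that is a factor of ${\bf u}$ is a complete mirror return to $w$ if neither $w$ nor $\widetilde w$ is a factor of $c_2\cdots c_{n-1}$, and either $w$ is a prefix and $\widetilde w$ a suffix of $c$, or $\widetilde w$ is a prefix and $w$ a suffix of $c$. With $E^\pm(w)$ the sets of right/left letter extensions of $w$ and $E(w)=\{(a,b): awb \text{ factor}\}$, $\Gamma(w)$ is the bipartite graph on $(E^-(w)\times\{-1\})\cup(E^+(w)\times\{+1\})$ with edges $\{(a,-1),(b,+1)\}$ for $(a,b)\in E(w)$; for palindromic $w$, $\Theta(w)$ is the graph on $E^+(w)$ with edges $\{a,b\}$ for $(a,b)\in E(w)$, $a\ne b$. *)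

theory Defs
  imports Main "HOL-Library.Sublist"
begin

definition factor :: "'a list \<Rightarrow> (nat \<Rightarrow> 'a) \<Rightarrow> bool" where
  "factor w u \<longleftrightarrow> (\<exists>i. w = map u [i..<i + length w])"

definition rev_closed :: "(nat \<Rightarrow> 'a) \<Rightarrow> bool" where
  "rev_closed u \<longleftrightarrow> (\<forall>w. factor w u \<longrightarrow> factor (rev w) u)"

text \<open>Complete mirror return \<open>c\<close> to \<open>w\<close>: \<open>c_2\<cdots>c_{n-1} = butlast (tl c)\<close>.\<close>
definition complete_mirror_return :: "(nat \<Rightarrow> 'a) \<Rightarrow> 'a list \<Rightarrow> 'a list \<Rightarrow> bool" where
  "complete_mirror_return u w c \<longleftrightarrow>
     factor c u \<and>
     \<not> sublist w (butlast (tl c)) \<and> \<not> sublist (rev w) (butlast (tl c)) \<and>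
     ((prefix w c \<and> suffix (rev w) c) \<or> (prefix (rev w) c \<and> suffix w c))"

definition ext_right :: "(nat \<Rightarrow> 'a) \<Rightarrow> 'a list \<Rightarrow> 'a set" where
  "ext_right u w = {b. factor (w @ [b]) u}"

definition ext_left :: "(nat \<Rightarrow> 'a) \<Rightarrow> 'a list \<Rightarrow> 'a set" where
  "ext_left u w = {a. factor (a # w) u}"

definition ext_both :: "(nat \<Rightarrow> 'a) \<Rightarrow> 'a list \<Rightarrow> ('a \<times> 'a) set" where
  "ext_both u w = {(a, b). factor (a # w @ [b]) u}"

definition Gamma_vertices :: "(nat \<Rightarrow> 'a) \<Rightarrow> 'a list \<Rightarrow> ('a \<times> int) set" where
  "Gamma_vertices u w = (ext_left u w \<times> {-1}) \<union> (ext_right u w \<times> {1})"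

definition Gamma_edges :: "(nat \<Rightarrow> 'a) \<Rightarrow> 'a list \<Rightarrow> ('a \<times> int) set set" where
  "Gamma_edges u w = {{(a, -1), (b, 1)} | a b. (a, b) \<in> ext_both u w}"

text \<open>The graph \<open>\<Theta>(w)\<close> (meaningful for palindromic \<open>w\<close>).\<close>
definition Theta_vertices :: "(nat \<Rightarrow> 'a) \<Rightarrow> 'a list \<Rightarrow> 'a set" where
  "Theta_vertices u w = ext_right u w"

definition Theta_edges :: "(nat \<Rightarrow> 'a) \<Rightarrow> 'a list \<Rightarrow> 'a set set" where
  "Theta_edges u w = {{a, b} | a b. (a, b) \<in> ext_both u w \<and> a \<noteq> b}"

end

theory Submission
  imports Defs
begin

text \<open>Reversing the palindrome \<open>v\<close> turns its suffix \<open>b w\<^sup>~\<close> into the prefix \<open>w b\<close>,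
  so \<open>a w b\<close> is a prefix of the factor \<open>a v\<close>.\<close>

lemma factor_append_left:
  assumes "factor (xs @ ys) u"
  shows "factor xs u"
proof -
  from assms obtain i where i: "xs @ ys = map u [i..<i + length (xs @ ys)]"
    unfolding factor_def by blast
  have "xs = take (length xs) (xs @ ys)" by simp
  also have "\<dots> = map u [i..<i + length xs]"
    by (subst i) (simp add: take_map take_upt)
  finally show ?thesis unfolding factor_def by blast
qed

lemma factor_prefix:
  assumes "prefix xs ys" and "factor ys u"
  shows "factor xs u"
  using assms factor_append_left unfolding prefix_def by blast

theorem lemma17:
  fixes u :: "nat \<Rightarrow> 'a" and w v :: "'a list" and a b :: 'a
  assumes "rev_closed u"
    and "factor w u"
    and "complete_mirror_return u w v"
    and "rev v = v"
    and "suffix (b # rev w) v"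
    and "factor (a # v) u"
  shows "{(a, -1), (b, 1)} \<in> Gamma_edges u w \<and>
         (rev w = w \<and> a \<noteq> b \<longrightarrow> {a, b} \<in> Theta_edges u w)"
proof -
  have "prefix (w @ [b]) v"
    using assms(4,5) by (metis suffix_to_prefix rev.simps(2) rev_rev_ident)
  then have "prefix (a # w @ [b]) (a # v)" by simp
  then have "factor (a # w @ [b]) u" using assms(6) by (rule factor_prefix)
  then have "(a, b) \<in> ext_both u w" unfolding ext_both_def by simp
  then show ?thesis unfolding Gamma_edges_def Theta_edges_def by blast
qed

end
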